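(* Let $a,b\in\mathbb{R}$ and let $n$ be a non-negative integer. Let $L^{a,b}_n=(d^{(n)}_{i,j})_{i,j\in\mathbb{N}}$ be the infinite lower triangular matrix with $d^{(n)}_{i,j}=a+jb$ if $i-j=n$ and $d^{(n)}_{i,j}=0$ otherwise. Then $L^{a,b}_n=L(ax^n,bx^n)$ belongs to the Lie algebra $\mathcal{L}(\mathcal{R}(\mathbb{R}))$ of the Riordan group, and for every $t\in\mathbb{R}$ the matrix $e^{tL^{a,b}_n}$ is the Riordan matrix $$e^{tL^{a,b}_n}=\begin{cases} T\!\left((1-bntx^n)^{\frac{b-a}{nb}}\ \middle|\ (1-bntx^n)^{\frac1n}\right) & \text{if } b\neq 0 \text{ (and } n\ge 1),\\[4pt] T\!\left(e^{atx^n}\ \middle|\ 1\right) & \text{if } b=0.\end{cases}$$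
   Context: All formal power series are in $\mathbb{R}[[x]]$. For $f,g\in\mathbb{R}[[x]]$ with $f(0)\neq0$, $g(0)\neq 0$, the Riordan matrix $T(f\mid g)=(d_{i,j})_{i,j\ge0}$ is the infinite lower triangular matrix with $d_{i,j}=[x^i]\dfrac{x^jf(x)}{g(x)^{j+1}}$ (the generating function of column $j$ is $x^jf/g^{j+1}$). The Riordan group $\mathcal{R}(\mathbb{R})$ is the set of all such matrices under matrix multiplication. For $\chi(x)=\sum\chi_kx^k$, $\alpha(x)=\sum\alpha_kx^k\in\mathbb{R}[[x]]$, $L(\chi,\alpha)$ denotes the infinite lower triangular matrix with entries $\ell_{i,j}=\chi_{i-j}+j\,\alpha_{i-j}$ for $i\ge j$ and $0$ for $i<j$; the Lie algebra of the Riordan group is $\mathcal{L}(\mathcal{R}(\mathbb{R}))=\{L(\chi,\alpha):\chi,\alpha\in\mathbb{R}[[x]]\}$. For an infinite lower triangular matrix $L$, $e^{tL}$ is the infinite lower triangular matrix whose leading $(m+1)\times(m+1)$ block equals the usual matrix exponential of the leading $(m+1)\times(m+1)$ block of $tL$, for every $m$. For $c\in\mathbb{R}$ and a real constant $s$, $(1-sx^n)^c$ denotes the formal power series $\sum_{k\ge0}\binom{c}{k}(-s)^kx^{nk}$ with generalized binomial coefficients. *)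

theory Defs
  imports "HOL-Computational_Algebra.Formal_Power_Series"
begin

definition riordan :: "real fps \<Rightarrow> real fps \<Rightarrow> nat \<Rightarrow> nat \<Rightarrow> real" where
  "riordan f g i j = fps_nth (fps_X ^ j * f * inverse (g ^ Suc j)) i"

definition lieL :: "real fps \<Rightarrow> real fps \<Rightarrow> nat \<Rightarrow> nat \<Rightarrow> real" where
  "lieL chi alpha i j = (if j \<le> i then fps_nth chi (i - j) + real j * fps_nth alpha (i - j) else 0)"

definition in_riordan_lie_algebra :: "(nat \<Rightarrow> nat \<Rightarrow> real) \<Rightarrow> bool" where
  "in_riordan_lie_algebra L \<longleftrightarrow> (\<exists>chi alpha. L = lieL chi alpha)"

definition Lab :: "real \<Rightarrow> real \<Rightarrow> nat \<Rightarrow> nat \<Rightarrow> nat \<Rightarrow> real" where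
  "Lab a b n i j = (if i \<ge> j \<and> i - j = n then a + real j * b else 0)"

definition blk_mult :: "nat \<Rightarrow> (nat \<Rightarrow> nat \<Rightarrow> real) \<Rightarrow> (nat \<Rightarrow> nat \<Rightarrow> real) \<Rightarrow> nat \<Rightarrow> nat \<Rightarrow> real" where
  "blk_mult m A B i j = (\<Sum>k\<le>m. A i k * B k j)"

fun blk_pow :: "nat \<Rightarrow> (nat \<Rightarrow> nat \<Rightarrow> real) \<Rightarrow> nat \<Rightarrow> nat \<Rightarrow> nat \<Rightarrow> real" where
  "blk_pow m A 0 = (\<lambda>i j. if i = j then 1 else 0)"
| "blk_pow m A (Suc k) = blk_mult m A (blk_pow m A k)"

definition blk_exp :: "nat \<Rightarrow> (nat \<Rightarrow> nat \<Rightarrow> real) \<Rightarrow> nat \<Rightarrow> nat \<Rightarrow> real" where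
  "blk_exp m A i j = (\<Sum>k. blk_pow m A k i j / fact k)"

text \<open>e^{L}: the infinite matrix whose every leading block is the exponential of the block.\<close>
definition is_mat_exp :: "(nat \<Rightarrow> nat \<Rightarrow> real) \<Rightarrow> (nat \<Rightarrow> nat \<Rightarrow> real) \<Rightarrow> bool" where
  "is_mat_exp L E \<longleftrightarrow> (\<forall>m i j. i \<le> m \<longrightarrow> j \<le> m \<longrightarrow> E i j = blk_exp m L i j)"

text \<open>(1 - s x^n)^c = sum_k (c choose k) (-s)^k x^{nk}  (used for n >= 1).\<close>
definition binpow_xn :: "real \<Rightarrow> nat \<Rightarrow> real \<Rightarrow> real fps" where
  "binpow_xn s n c = Abs_fps (\<lambda>i. if n dvd i then (c gchoose (i div n)) * (-s) ^ (i div n) else 0)"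

definition exp_xn :: "real \<Rightarrow> nat \<Rightarrow> real fps" where
  "exp_xn c n = (if n = 0 then fps_const (exp c) else fps_compose (fps_exp c) (fps_X ^ n))"

end

theory Submission
  imports Defs
begin

text \<open>
  The matrix \<open>t L\<close> is a weighted shift by \<open>n\<close> with weights \<open>w j = t (a + j b)\<close>.
  Its \<open>k\<close>-th power is supported on the \<open>kn\<close>-th subdiagonal, with entry
  \<open>w j w (j+n) \<dots> w (j+(k-1)n)\<close> in column \<open>j\<close>, so the exponential series has a single
  nonzero term in each entry. On the Riordan side, powers of \<open>(1 - s x\<^sup>n)\<close> multiply like
  exponentials (Vandermonde), so column \<open>j\<close> of \<open>T(f | g)\<close> is \<open>x\<^sup>j (1 - s x\<^sup>n)\<^sup>e\<close> for an
  explicit exponent \<open>e\<close>, and the generalized binomial coefficient of \<open>(1 - s x\<^sup>n)\<^sup>e\<close>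
  times \<open>(-s)\<^sup>k\<close> is exactly the same product of weights divided by \<open>k!\<close>.
  For \<open>b = 0\<close> the weights are constant and the products are the coefficients of \<open>exp (a t x\<^sup>n)\<close>.
\<close>

unbundle fps_syntax

lemma fps_compose_X_power_nth:
  fixes f :: "'a::comm_semiring_1 fps"
  assumes "n > 0"
  shows "(f oo fps_X ^ n) $ m = (if n dvd m then f $ (m div n) else 0)"
proof -
  have "(f oo fps_X ^ n) $ m = (\<Sum>i\<in>{0..m}. if n dvd m \<and> i = m div n then f $ i else 0)"
    unfolding fps_compose_nth
  proof (rule sum.cong[OF refl])
    fix i
    have "m = n * i \<longleftrightarrow> n dvd m \<and> i = m div n" using assms by auto
    then show "f $ i * ((fps_X ^ n) ^ i) $ m = (if n dvd m \<and> i = m div n then f $ i else 0)"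
      by (simp add: power_mult[symmetric] mult.commute)
  qed
  also have "\<dots> = (if n dvd m then f $ (m div n) else 0)"
    by (simp add: sum.delta' div_le_dividend)
  finally show ?thesis .
qed

lemma binpow_xn_eq_compose:
  assumes "n > 0"
  shows "binpow_xn s n c = fps_binomial c oo (fps_const (- s) * fps_X) oo fps_X ^ n"
  unfolding fps_compose_linear
  by (rule fps_ext) (simp add: fps_compose_X_power_nth assms binpow_xn_def mult.commute)

lemma binpow_xn_add:
  assumes "n > 0"
  shows "binpow_xn s n (c + d) = binpow_xn s n c * binpow_xn s n d"
  using assms by (simp add: binpow_xn_eq_compose fps_binomial_add_mult fps_compose_mult_distrib)

lemma binpow_xn_0: "n > 0 \<Longrightarrow> binpow_xn s n 0 = 1"
  by (simp add: binpow_xn_eq_compose)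

lemma binpow_xn_power: "n > 0 \<Longrightarrow> binpow_xn s n c ^ k = binpow_xn s n (real k * c)"
  by (induction k) (simp_all add: binpow_xn_0 binpow_xn_add algebra_simps)

lemma binpow_xn_inverse: "n > 0 \<Longrightarrow> inverse (binpow_xn s n c) = binpow_xn s n (- c)"
  by (rule fps_inverse_unique) (simp add: binpow_xn_add[symmetric] binpow_xn_0)

lemma riordan_nth:
  "riordan f g i j = (if j \<le> i then (f * inverse (g ^ Suc j)) $ (i - j) else 0)"
  by (simp add: riordan_def mult.assoc fps_X_power_mult_nth)

lemma riordan_binpow_xn:
  assumes "n > 0"
  shows "riordan (binpow_xn s n c) (binpow_xn s n d) i j
    = (if j \<le> i then binpow_xn s n (c - real (Suc j) * d) $ (i - j) else 0)"
  using assms by (simp add: riordan_nth binpow_xn_power binpow_xn_inverse binpow_xn_add[symmetric] algebra_simps)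

lemma gbinomial_mult_power_eq_prod:
  fixes e s :: "'a::field_char_0"
  shows "(e gchoose k) * (- s) ^ k = (\<Prod>r<k. (of_nat r - e) * s) / fact k"
proof -
  have "(e gchoose k) * (- s) ^ k = (\<Prod>r<k. (e - of_nat r) * (- s)) / fact k"
    by (simp add: gbinomial_prod_rev atLeast0LessThan prod.distrib del: mult_minus_right)
  also have "\<dots> = (\<Prod>r<k. (of_nat r - e) * s) / fact k"
    by (simp add: algebra_simps)
  finally show ?thesis .
qed

definition weighted_shift :: "nat \<Rightarrow> (nat \<Rightarrow> real) \<Rightarrow> nat \<Rightarrow> nat \<Rightarrow> real" where
  "weighted_shift n w i l = (if l \<le> i \<and> i - l = n then w l else 0)"

lemma blk_pow_weighted_shift:
  assumes "i \<le> m"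
  shows "blk_pow m (weighted_shift n w) k i j = (if i = j + n * k then \<Prod>r<k. w (j + n * r) else 0)"
  using assms
proof (induction k arbitrary: i)
  case 0
  then show ?case by simp
next
  case (Suc k)
  have "blk_pow m (weighted_shift n w) (Suc k) i j
      = (\<Sum>l\<le>m. if l = i - n then (if n \<le> i then w l * blk_pow m (weighted_shift n w) k l j else 0) else 0)"
    unfolding blk_pow.simps blk_mult_def
    by (rule sum.cong[OF refl]) (auto simp: weighted_shift_def)
  \<comment> \<open>the only contributing index \<open>i - n\<close> lies below \<open>i \<le> m\<close>, so the block truncation is harmless\<close>
  also have "\<dots> = (if n \<le> i then w (i - n) * blk_pow m (weighted_shift n w) k (i - n) j else 0)"
    using Suc.prems by (simp add: le_trans[OF diff_le_self])
  also have "\<dots> = (if i = j + n * Suc k then \<Prod>r<Suc k. w (j + n * r) else 0)"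
    using Suc.prems by (auto simp: Suc.IH mult_Suc_right prod.lessThan_Suc mult.commute)
  finally show ?case .
qed

lemma blk_exp_weighted_shift:
  assumes "i \<le> m" "n > 0"
  shows "blk_exp m (weighted_shift n w) i j =
    (if j \<le> i \<and> n dvd (i - j) then (\<Prod>r<(i - j) div n. w (j + n * r)) / fact ((i - j) div n) else 0)"
proof (cases "j \<le> i \<and> n dvd (i - j)")
  case True
  define k where "k = (i - j) div n"
  have "i = j + n * k' \<longleftrightarrow> k' = k" for k'
    using True assms(2) by (auto simp: k_def)
  then have "(\<lambda>k'. blk_pow m (weighted_shift n w) k' i j / fact k')
      = (\<lambda>k'. if k' = k then (\<Prod>r<k'. w (j + n * r)) / fact k' else 0)"
    by (auto simp: blk_pow_weighted_shift[OF assms(1)])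
  moreover have "(\<lambda>k'. if k' = k then (\<Prod>r<k'. w (j + n * r)) / fact k' else 0)
      sums ((\<Prod>r<k. w (j + n * r)) / fact k)"
    by (rule sums_single)
  ultimately show ?thesis
    using True by (simp add: blk_exp_def k_def sums_iff)
next
  case False
  then have "i \<noteq> j + n * k" for k
    by auto
  then show ?thesis
    by (simp add: blk_exp_def blk_pow_weighted_shift[OF assms(1)] if_not_P[OF False])
qed

lemma blk_exp_weighted_diagonal:
  assumes "i \<le> m"
  shows "blk_exp m (weighted_shift 0 w) i j = (if i = j then exp (w j) else 0)"
proof -
  have "(\<lambda>k. w j ^ k /\<^sub>R fact k) sums exp (w j)"
    by (rule exp_converges)
  then show ?thesis
    by (auto simp: blk_exp_def blk_pow_weighted_shift[OF assms] sums_iff divide_inverse mult.commute)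
qed

lemma is_mat_exp_weighted_shift:
  assumes "n > 0"
  shows "is_mat_exp (weighted_shift n w) (\<lambda>i j.
    if j \<le> i \<and> n dvd (i - j) then (\<Prod>r<(i - j) div n. w (j + n * r)) / fact ((i - j) div n) else 0)"
  using assms by (simp add: is_mat_exp_def blk_exp_weighted_shift)

lemma is_mat_exp_weighted_diagonal:
  "is_mat_exp (weighted_shift 0 w) (\<lambda>i j. if i = j then exp (w j) else 0)"
  by (simp add: is_mat_exp_def blk_exp_weighted_diagonal)

lemma Lab_eq_lieL: "Lab a b n = lieL (fps_const a * fps_X ^ n) (fps_const b * fps_X ^ n)"
  by (intro ext) (auto simp: Lab_def lieL_def)

lemma scaled_Lab_eq_weighted_shift:
  "(\<lambda>i j. t * Lab a b n i j) = weighted_shift n (\<lambda>l. t * (a + real l * b))"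
  by (intro ext) (simp add: Lab_def weighted_shift_def)

lemma is_mat_exp_Lab:
  assumes "b \<noteq> 0" "n > 0"
  shows "is_mat_exp (\<lambda>i j. t * Lab a b n i j)
    (riordan (binpow_xn (b * real n * t) n ((b - a) / (real n * b)))
             (binpow_xn (b * real n * t) n (1 / real n)))"
proof -
  let ?s = "b * real n * t"
  define e where "e j = - (a + real j * b) / (real n * b)" for j
  have exponent: "(b - a) / (real n * b) - real (Suc j) * (1 / real n) = e j" for j
    using assms by (simp add: e_def field_simps)
  have factor: "(real r - e j) * ?s = t * (a + real (j + n * r) * b)" for r j
    using assms by (simp add: e_def field_simps)
  have "riordan (binpow_xn ?s n ((b - a) / (real n * b))) (binpow_xn ?s n (1 / real n))
    = (\<lambda>i j. if j \<le> i \<and> n dvd (i - j)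
        then (\<Prod>r<(i - j) div n. t * (a + real (j + n * r) * b)) / fact ((i - j) div n) else 0)"
    unfolding riordan_binpow_xn[OF assms(2)] exponent
    by (intro ext) (simp add: binpow_xn_def gbinomial_mult_power_eq_prod factor)
  then show ?thesis
    using is_mat_exp_weighted_shift[OF assms(2), of "\<lambda>l. t * (a + real l * b)"]
    by (simp add: scaled_Lab_eq_weighted_shift)
qed

lemma is_mat_exp_Lab_b0:
  "is_mat_exp (\<lambda>i j. t * Lab a 0 n i j) (riordan (exp_xn (a * t) n) 1)"
proof (cases "n = 0")
  case True
  have "riordan (exp_xn (a * t) 0) 1 = (\<lambda>i j. if i = j then exp (t * a) else 0)"
    by (intro ext) (simp add: riordan_nth exp_xn_def mult.commute)
  then show ?thesis
    using True is_mat_exp_weighted_diagonal by (simp add: scaled_Lab_eq_weighted_shift)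
next
  case False
  then have "riordan (exp_xn (a * t) n) 1 = (\<lambda>i j. if j \<le> i \<and> n dvd (i - j)
        then (\<Prod>r<(i - j) div n. t * a) / fact ((i - j) div n) else 0)"
    by (intro ext) (auto simp: riordan_nth exp_xn_def fps_compose_X_power_nth mult.commute)
  then show ?thesis
    using False is_mat_exp_weighted_shift[of n "\<lambda>_. t * a"] by (simp add: scaled_Lab_eq_weighted_shift)
qed

theorem mainTheorem1:
  fixes a b :: real and n :: nat
  shows "Lab a b n = lieL (fps_const a * fps_X ^ n) (fps_const b * fps_X ^ n)
    \<and> in_riordan_lie_algebra (Lab a b n)
    \<and> (b \<noteq> 0 \<longrightarrow> n \<ge> 1 \<longrightarrow> (\<forall>t::real.
          is_mat_exp (\<lambda>i j. t * Lab a b n i j)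
            (riordan (binpow_xn (b * real n * t) n ((b - a) / (real n * b)))
                     (binpow_xn (b * real n * t) n (1 / real n)))))
    \<and> (b = 0 \<longrightarrow> (\<forall>t::real.
          is_mat_exp (\<lambda>i j. t * Lab a b n i j) (riordan (exp_xn (a * t) n) 1)))"
  using Lab_eq_lieL is_mat_exp_Lab is_mat_exp_Lab_b0
  by (auto simp: in_riordan_lie_algebra_def)

end
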